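(* Let $\mathcal{X}=\langle P,K,V\rangle$ be a polyhedral model, $x\in P$, and $\sigma\in K$ the unique simplex with $x\in\tilde\sigma$. For every SLCS formula $\phi$: $\mathcal{X},x\models\phi$ if and only if $\mathcal{M}(\mathcal{X}),\tilde\sigma\models\phi$.
   Context: A $d$-simplex $\sigma\subseteq\mathbb{R}^m$ is the convex hull of $d+1$ affinely independent points $v_0,\dots,v_d$ (its vertices); the simplexes spanned by subsets of the vertices (including the empty simplex) are its faces, and $\tau\preceq\sigma$ means $\tau$ is a face of $\sigma$. The relative interior of $\sigma$ is $\tilde\sigma=\{\sum_i\lambda_iv_i:\lambda_i\in(0,1],\sum_i\lambda_i=1\}$. A simplicial complex $K$ is a finite set of simplexes of $\mathbb{R}^m$ closed under taking faces and such that the intersection of any two of its simplexes is a face of both. Its polyhedron is $|K|=\bigcup K$, with the subspace topology of $\mathbb{R}^m$; $\mathcal{C}$ and $\mathcal{I}$ denote closure and interior in this space. The cells of $K$ are the sets $\tilde\sigma$ for nonempty $\sigma\in K$; they form a partition $\tilde K$ of $|K|$. A path in a space $P$ is a continuous $\pi:[0,1]\to P$; $\pi(S)=\{\pi(s):s\in S\}$. Fix a finite set $AP$ of atomic propositions. A polyhedral model is $\mathcal{X}=\langle P,K,V\rangle$ with $K$ a simplicial complex, $P=|K|$, and $V:AP\to\mathcal{P}(P)$ such that each $V(p)$ is a union of cells of $K$ ($K$ is then called coherent with the model). SLCS formulas: $\phi::=\top\mid p\mid\neg\phi\mid\phi\wedge\phi\mid\Box\phi\mid\gamma(\phi,\phi)$,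 $p\in AP$. Semantics at $x\in P$, with $[\![\phi]\!]=\{x\in P:\mathcal{X},x\models\phi\}$: $\top$ always holds; $x\models p$ iff $x\in V(p)$; Boolean connectives as usual; $x\models\Box\phi$ iff $x\in\mathcal{I}([\![\phi]\!])$; $x\models\gamma(\phi,\psi)$ iff there is a path $\pi$ in $P$ with $\pi(0)=x$, $\pi((0,1))\subseteq[\![\phi]\!]$ and $\pi(1)\in[\![\psi]\!]$. The finite Kripke model $\mathcal{M}(\mathcal{X})$ has as states the cells of $K$, accessibility relation $\tilde\sigma\,\tilde\preceq\,\tilde\tau$ iff $\sigma\preceq\tau$, and valuation $V_M(p)=\{\tilde\sigma:\tilde\sigma\subseteq V(p)\}$. A $\pm$-path in $\mathcal{M}(\mathcal{X})$ is a map $\pi:\{0,\dots,k\}\to\tilde K$ with $k\ge2$ such that $\pi(0)\,\tilde\preceq\,\pi(1)$, $\pi(k)\,\tilde\preceq\,\pi(k-1)$, and for each $i<k$ either $\pi(i)\,\tilde\preceq\,\pi(i+1)$ or $\pi(i+1)\,\tilde\preceq\,\pi(i)$. Satisfaction in $\mathcal{M}(\mathcal{X})$ at a cell $\tilde\sigma$, with $[\![\phi]\!]_M$ the set of satisfying cells: $\top$ always; $p$ iff $\tilde\sigma\in V_M(p)$; Booleans as usual; $\tilde\sigma\models\Box\phi$ iff every $\tilde\tau$ with $\tilde\sigma\,\tilde\preceq\,\tilde\tau$ satisfies $\phi$; $\tilde\sigma\models\gamma(\phi,\psi)$ iff there is a $\pm$-path $\pi:\{0,\dots,k\}\to\tilde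 K$ with $\pi(0)=\tilde\sigma$, $\pi(\{1,\dots,k-1\})\subseteq[\![\phi]\!]_M$ and $\pi(k)\in[\![\psi]\!]_M$. *)

theory Defs
  imports "HOL-Analysis.Analysis"
begin

text \<open>A simplex is the convex hull of a finite affinely independent set of points
(its vertices); the empty set is the empty simplex.\<close>
definition is_simplex :: "'a::euclidean_space set \<Rightarrow> bool" where
  "is_simplex \<sigma> \<longleftrightarrow> (\<exists>V. finite V \<and> \<not> affine_dependent V \<and> \<sigma> = convex hull V)"

definition sface :: "'a::euclidean_space set \<Rightarrow> 'a set \<Rightarrow> bool" where
  "sface \<tau> \<sigma> \<longleftrightarrow> (\<exists>V W. finite V \<and> \<not> affine_dependent V \<and> \<sigma> = convex hull V
                      \<and> W \<subseteq> V \<and> \<tau> = convex hull W)"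

text \<open>Relative interior of a simplex, as defined in the paper:
  positive barycentric combinations of its vertices.\<close>
definition cell :: "'a::euclidean_space set \<Rightarrow> 'a set" where
  "cell \<sigma> = {y. \<exists>V u. finite V \<and> \<not> affine_dependent V \<and> \<sigma> = convex hull V
                 \<and> (\<forall>v\<in>V. 0 < u v \<and> u v \<le> 1) \<and> sum u V = 1
                 \<and> (\<Sum>v\<in>V. u v *\<^sub>R v) = y}"

definition simplicial_complex :: "'a::euclidean_space set set \<Rightarrow> bool" where
  "simplicial_complex K \<longleftrightarrow> finite K \<and> (\<forall>\<sigma>\<in>K. is_simplex \<sigma>)
     \<and> (\<forall>\<sigma>\<in>K. \<forall>\<tau>. sface \<tau> \<sigma> \<longrightarrow> \<tau> \<in> K)
     \<and> (\<forall>\<sigma>\<in>K. \<forall>\<tau>\<in>K. sface (\<sigma> \<inter> \<tau>) \<sigma> \<and> sface (\<sigma> \<inter> \<tau>) \<tau>)"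

definition cells :: "'a::euclidean_space set set \<Rightarrow> 'a set set" where
  "cells K = {cell \<sigma> | \<sigma>. \<sigma> \<in> K \<and> \<sigma> \<noteq> {}}"

text \<open>Polyhedral model \<open>\<langle>|K|, K, V\<rangle>\<close>: every \<open>V p\<close> is a union of cells of \<open>K\<close>.\<close>
definition polyhedral_model :: "'a::euclidean_space set set \<Rightarrow> ('p \<Rightarrow> 'a set) \<Rightarrow> bool" where
  "polyhedral_model K V \<longleftrightarrow> simplicial_complex K
     \<and> (\<forall>p. \<exists>C. C \<subseteq> cells K \<and> V p = \<Union>C)"

datatype 'p form =
    FTop
  | FAtom 'p
  | FNeg "'p form"
  | FAnd "'p form" "'p form"
  | FBox "'p form"
  | FGamma "'p form" "'p form"

fun psem :: "'a::euclidean_space set set \<Rightarrow> ('p \<Rightarrow> 'a set) \<Rightarrow> 'p form \<Rightarrow> 'a set" where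
  "psem K V FTop = \<Union>K"
| "psem K V (FAtom p) = V p"
| "psem K V (FNeg \<phi>) = \<Union>K - psem K V \<phi>"
| "psem K V (FAnd \<phi> \<psi>) = psem K V \<phi> \<inter> psem K V \<psi>"
| "psem K V (FBox \<phi>) = (top_of_set (\<Union>K)) interior_of (psem K V \<phi>)"
| "psem K V (FGamma \<phi> \<psi>) =
     {x \<in> \<Union>K. \<exists>\<pi>. path \<pi> \<and> path_image \<pi> \<subseteq> \<Union>K \<and> \<pi> 0 = x
                 \<and> \<pi> ` {0<..<1} \<subseteq> psem K V \<phi> \<and> \<pi> 1 \<in> psem K V \<psi>}"

definition cacc :: "'a::euclidean_space set set \<Rightarrow> 'a set \<Rightarrow> 'a set \<Rightarrow> bool" where
  "cacc K c d \<longleftrightarrow> (\<exists>\<sigma>\<in>K. \<exists>\<tau>\<in>K. \<sigma> \<noteq> {} \<and> \<tau> \<noteq> {} \<and> c = cell \<sigma> \<and> d = cell \<tau> \<and> sface \<sigma> \<tau>)"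

definition pm_path :: "'a::euclidean_space set set \<Rightarrow> nat \<Rightarrow> (nat \<Rightarrow> 'a set) \<Rightarrow> bool" where
  "pm_path K k \<pi> \<longleftrightarrow> 2 \<le> k \<and> (\<forall>i\<le>k. \<pi> i \<in> cells K)
     \<and> cacc K (\<pi> 0) (\<pi> 1) \<and> cacc K (\<pi> k) (\<pi> (k - 1))
     \<and> (\<forall>i<k. cacc K (\<pi> i) (\<pi> (Suc i)) \<or> cacc K (\<pi> (Suc i)) (\<pi> i))"

fun msem :: "'a::euclidean_space set set \<Rightarrow> ('p \<Rightarrow> 'a set) \<Rightarrow> 'p form \<Rightarrow> 'a set set" where
  "msem K V FTop = cells K"
| "msem K V (FAtom p) = {c \<in> cells K. c \<subseteq> V p}"
| "msem K V (FNeg \<phi>) = cells K - msem K V \<phi>"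
| "msem K V (FAnd \<phi> \<psi>) = msem K V \<phi> \<inter> msem K V \<psi>"
| "msem K V (FBox \<phi>) = {c \<in> cells K. \<forall>d \<in> cells K. cacc K c d \<longrightarrow> d \<in> msem K V \<phi>}"
| "msem K V (FGamma \<phi> \<psi>) =
     {c \<in> cells K. \<exists>k \<pi>. pm_path K k \<pi> \<and> \<pi> 0 = c
                 \<and> (\<forall>i \<in> {1..k-1}. \<pi> i \<in> msem K V \<phi>) \<and> \<pi> k \<in> msem K V \<psi>}"

end

(*
  The two semantics agree because every SLCS formula denotes a union of cells: by induction on
  the formula, its polyhedral extension is the union of the cells satisfying it in the Kripke
  model. For the box, the open star of a cell c (the union of the cells having c as a face) is an
  open neighbourhood of c in |K|, while c lies in the closure of every cell above it. For gamma, a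
  segment from a point of a cell to a point of a cell above it stays in the larger cell except
  possibly at its first point, so a pm-path can be traced by a path made of such segments.
  Conversely, a path leaves its initial cell through the open star of that cell, reaches its final
  cell through the open star of that one, and in between runs through a connected subset of the
  union of the cells satisfying the first formula; connectedness forces these cells to be linked
  by a chain of adjacent cells, which yields the pm-path.
*)

theory Submission
  imports Defs
begin

lemma cell_eq_rel_interior:
  assumes "is_simplex \<sigma>"
  shows "cell \<sigma> = rel_interior \<sigma>"
proof
  show "cell \<sigma> \<subseteq> rel_interior \<sigma>"
    unfolding cell_def using rel_interior_convex_hull_explicit by fastforce
  show "rel_interior \<sigma> \<subseteq> cell \<sigma>"
  proof
    fix y assume y: "y \<in> rel_interior \<sigma>"
    obtain W where W: "finite W" "\<not> affine_dependent W" "\<sigma> = convex hull W"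
      using assms unfolding is_simplex_def by blast
    with y obtain u where u: "\<forall>v\<in>W. 0 < u v" "sum u W = 1" "(\<Sum>v\<in>W. u v *\<^sub>R v) = y"
      using rel_interior_convex_hull_explicit[OF W(2)] by auto
    have "u v \<le> 1" if "v \<in> W" for v
      using member_le_sum[of v W u] u W(1) that by (simp add: less_imp_le)
    then show "y \<in> cell \<sigma>"
      unfolding cell_def using W u by blast
  qed
qed

lemma sface_iff_face_of: "is_simplex \<sigma> \<Longrightarrow> sface \<tau> \<sigma> \<longleftrightarrow> \<tau> face_of \<sigma>"
  unfolding sface_def is_simplex_def using face_of_convex_hull_affine_independent by blast

lemma is_simplex_convex: "is_simplex \<sigma> \<Longrightarrow> convex \<sigma>"
  unfolding is_simplex_def by auto

lemma is_simplex_compact: "is_simplex \<sigma> \<Longrightarrow> compact \<sigma>"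
  unfolding is_simplex_def using compact_convex_hull finite_imp_compact by blast

lemma simplex_mem_rel_interior_face:
  assumes "is_simplex \<sigma>" "x \<in> \<sigma>"
  obtains \<rho> where "\<rho> face_of \<sigma>" "x \<in> rel_interior \<rho>"
proof -
  obtain W where W: "finite W" "\<not> affine_dependent W" "\<sigma> = convex hull W"
    using assms(1) unfolding is_simplex_def by blast
  with assms(2) obtain u where u: "\<forall>v\<in>W. 0 \<le> u v" "sum u W = 1" "(\<Sum>v\<in>W. u v *\<^sub>R v) = x"
    using convex_hull_finite[of W] by auto
  define W' where "W' = {v\<in>W. 0 < u v}"
  have W': "W' \<subseteq> W" "\<forall>v\<in>W - W'. u v = 0"
    using u(1) unfolding W'_def by force+
  have "sum u W' = 1"
    using u(2) sum.mono_neutral_left[OF W(1) W'(1), of u] W'(2) by simp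
  moreover have "(\<Sum>v\<in>W'. u v *\<^sub>R v) = x"
    using u(3) sum.mono_neutral_left[OF W(1) W'(1), of "\<lambda>v. u v *\<^sub>R v"] W'(2) by simp
  ultimately have "x \<in> rel_interior (convex hull W')"
    using rel_interior_convex_hull_explicit[OF affine_independent_subset[OF W(2) W'(1)]]
    unfolding W'_def by auto
  moreover have "convex hull W' face_of \<sigma>"
    using face_of_convex_hull_affine_independent[OF W(2)] W(3) W'(1) by blast
  ultimately show thesis using that by blast
qed

lemma path_enters_open_near_start:
  assumes "path g" "path_image g \<subseteq> S" "openin (top_of_set S) U" "g 0 \<in> U"
  obtains t where "0 < t" "t \<le> 1/2" "g t \<in> U"
proof -
  obtain V where V: "open V" "U = S \<inter> V"
    using assms(3) unfolding openin_open by blast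
  have "openin (top_of_set {0..1}) ({0..1} \<inter> g -` V)"
    using continuous_openin_preimage_gen[OF _ V(1)] assms(1) unfolding path_def by blast
  moreover have "0 \<in> {0..1} \<inter> g -` V"
    using assms(4) V(2) by auto
  ultimately obtain e where e: "e > 0" "\<forall>t\<in>{0..1}. dist t 0 < e \<longrightarrow> g t \<in> V"
    unfolding openin_euclidean_subtopology_iff by blast
  define t where "t = min (e/2) (1/2::real)"
  have t: "0 < t" "t \<le> 1/2" "t < e"
    using e(1) unfolding t_def by auto
  then have "g t \<in> V" "g t \<in> S"
    using e(2) assms(2) unfolding path_image_def by (auto simp: dist_real_def)
  then show thesis
    using that t V(2) by blast
qed

lemma path_enters_open_near_end:
  assumes "path g" "path_image g \<subseteq> S" "openin (top_of_set S) U" "g 1 \<in> U"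
  obtains t where "1/2 \<le> t" "t < 1" "g t \<in> U"
proof -
  have "path (reversepath g)" "path_image (reversepath g) \<subseteq> S"
    using assms(1,2) by simp_all
  moreover have "reversepath g 0 \<in> U"
    using assms(4) by (simp add: reversepath_def)
  ultimately obtain t where "0 < t" "t \<le> 1/2" "reversepath g t \<in> U"
    using path_enters_open_near_start assms(3) by metis
  then show thesis
    using that[of "1 - t"] by (simp add: reversepath_def)
qed

lemma reversepath_image_atLeastLessThan: "reversepath g ` {0..<1} = g ` {0<..1}"
proof -
  have "(\<lambda>t. 1 - t) ` {0..<1} = {0<..1::real}"
    by (auto simp: image_iff intro!: bexI[of _ "1 - _"])
  then show ?thesis
    unfolding reversepath_def by (metis image_image)
qed

lemma joinpaths_image_greaterThanLessThan:
  "(f +++ g) ` {0<..<1} \<subseteq> f ` {0<..1} \<union> g ` {0..<1}"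
proof
  fix y assume "y \<in> (f +++ g) ` {0<..<1}"
  then obtain t :: real where t: "0 < t" "t < 1" "y = (f +++ g) t"
    by auto
  show "y \<in> f ` {0<..1} \<union> g ` {0..<1}"
  proof (cases "t \<le> 1/2")
    case True
    then show ?thesis
      using t by (auto simp: joinpaths_def intro!: image_eqI[of _ _ "2 * t"])
  next
    case False
    then show ?thesis
      using t by (auto simp: joinpaths_def intro!: image_eqI[of _ _ "2 * t - 1"])
  qed
qed

lemma joinpaths_image_atLeastLessThan:
  "(f +++ g) ` {0..<1} \<subseteq> f ` {0..1} \<union> g ` {0..<1}"
proof
  fix y assume "y \<in> (f +++ g) ` {0..<1}"
  then obtain t :: real where t: "0 \<le> t" "t < 1" "y = (f +++ g) t"
    by auto
  show "y \<in> f ` {0..1} \<union> g ` {0..<1}"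
  proof (cases "t \<le> 1/2")
    case True
    then show ?thesis
      using t by (auto simp: joinpaths_def intro!: image_eqI[of _ _ "2 * t"])
  next
    case False
    then show ?thesis
      using t by (auto simp: joinpaths_def intro!: image_eqI[of _ _ "2 * t - 1"])
  qed
qed

lemma msem_subset_cells: "msem K V \<phi> \<subseteq> cells K"
  by (induction \<phi>) auto

locale simplicial =
  fixes K :: "'a::euclidean_space set set"
  assumes simplicial_complex: "simplicial_complex K"
begin

lemma finite_complex: "finite K"
  using simplicial_complex unfolding simplicial_complex_def by blast

lemma simplex: "\<sigma> \<in> K \<Longrightarrow> is_simplex \<sigma>"
  using simplicial_complex unfolding simplicial_complex_def by blast

lemma face_of_mem: "\<sigma> \<in> K \<Longrightarrow> \<tau> face_of \<sigma> \<Longrightarrow> \<tau> \<in> K"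
  using simplicial_complex sface_iff_face_of simplex unfolding simplicial_complex_def by blast

lemma Int_face_of: "\<sigma> \<in> K \<Longrightarrow> \<tau> \<in> K \<Longrightarrow> \<sigma> \<inter> \<tau> face_of \<sigma>"
  using simplicial_complex sface_iff_face_of simplex unfolding simplicial_complex_def by blast

lemma rel_interior_meets_imp_eq:
  assumes "\<sigma> \<in> K" "\<tau> \<in> K" "x \<in> rel_interior \<sigma>" "x \<in> rel_interior \<tau>"
  shows "\<sigma> = \<tau>"
proof -
  have "\<sigma> \<inter> \<tau> = \<sigma>" "\<tau> \<inter> \<sigma> = \<tau>"
    using Int_face_of assms face_of_disjoint_rel_interior rel_interior_subset by blast+
  then show ?thesis by blast
qed

lemma face_of_if_rel_interior_meets:
  assumes "\<tau> \<in> K" "\<rho> \<in> K" "x \<in> \<tau>" "x \<in> rel_interior \<rho>"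
  shows "\<rho> face_of \<tau>"
proof -
  obtain \<rho>' where "\<rho>' face_of \<tau>" "x \<in> rel_interior \<rho>'"
    using simplex_mem_rel_interior_face[OF simplex[OF assms(1)] assms(3)] .
  then show ?thesis
    using face_of_mem rel_interior_meets_imp_eq assms by metis
qed

lemma mem_rel_interior_simplex:
  assumes "x \<in> \<Union>K"
  obtains \<sigma> where "\<sigma> \<in> K" "x \<in> rel_interior \<sigma>"
  using assms simplex_mem_rel_interior_face face_of_mem simplex by (metis UnionE)

lemma cell_eq: "\<sigma> \<in> K \<Longrightarrow> cell \<sigma> = rel_interior \<sigma>"
  using cell_eq_rel_interior simplex by blast

lemma rel_interior_eq_empty_iff: "\<sigma> \<in> K \<Longrightarrow> rel_interior \<sigma> = {} \<longleftrightarrow> \<sigma> = {}"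
  using rel_interior_eq_empty is_simplex_convex simplex by blast

lemma cells_eq: "cells K = {rel_interior \<sigma> | \<sigma>. \<sigma> \<in> K \<and> \<sigma> \<noteq> {}}"
  unfolding cells_def using cell_eq by auto

lemma cacc_iff_face_of:
  assumes "\<sigma> \<in> K" "\<tau> \<in> K" "\<sigma> \<noteq> {}" "\<tau> \<noteq> {}"
  shows "cacc K (rel_interior \<sigma>) (rel_interior \<tau>) \<longleftrightarrow> \<sigma> face_of \<tau>"
proof
  have ri_inj: "\<sigma>' = \<sigma>''" if "\<sigma>' \<in> K" "\<sigma>'' \<in> K" "\<sigma>' \<noteq> {}"
    "rel_interior \<sigma>' = rel_interior \<sigma>''" for \<sigma>' \<sigma>''
    using that rel_interior_meets_imp_eq rel_interior_eq_empty_iff by blast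
  assume "cacc K (rel_interior \<sigma>) (rel_interior \<tau>)"
  then obtain \<sigma>' \<tau>' where "\<sigma>' \<in> K" "\<tau>' \<in> K" "\<sigma>' \<noteq> {}" "\<tau>' \<noteq> {}"
    "rel_interior \<sigma> = rel_interior \<sigma>'" "rel_interior \<tau> = rel_interior \<tau>'" "sface \<sigma>' \<tau>'"
    unfolding cacc_def using cell_eq by metis
  then show "\<sigma> face_of \<tau>"
    using ri_inj assms sface_iff_face_of simplex by metis
next
  assume "\<sigma> face_of \<tau>"
  then show "cacc K (rel_interior \<sigma>) (rel_interior \<tau>)"
    unfolding cacc_def using assms cell_eq sface_iff_face_of simplex by metis
qed

lemma caccE:
  assumes "cacc K c d"
  obtains \<sigma> \<tau> where "\<sigma> \<in> K" "\<tau> \<in> K" "\<sigma> \<noteq> {}" "c = rel_interior \<sigma>" "d = rel_interior \<tau>"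
    "\<sigma> face_of \<tau>"
  using assms cell_eq sface_iff_face_of simplex unfolding cacc_def by metis

lemma cacc_cells: "cacc K c d \<Longrightarrow> c \<in> cells K \<and> d \<in> cells K"
  unfolding cacc_def cells_def by blast

lemma cacc_refl: "c \<in> cells K \<Longrightarrow> cacc K c c"
  unfolding cells_eq using cacc_iff_face_of face_of_refl is_simplex_convex simplex by blast

lemma cells_nonempty: "c \<in> cells K \<Longrightarrow> c \<noteq> {}"
  unfolding cells_eq using rel_interior_eq_empty_iff by blast

lemma cells_disjoint: "c \<in> cells K \<Longrightarrow> d \<in> cells K \<Longrightarrow> x \<in> c \<Longrightarrow> x \<in> d \<Longrightarrow> c = d"
  unfolding cells_eq using rel_interior_meets_imp_eq by blast

lemma Union_cells: "\<Union>(cells K) = \<Union>K"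
proof
  show "\<Union>(cells K) \<subseteq> \<Union>K"
    unfolding cells_eq using rel_interior_subset by blast
  show "\<Union>K \<subseteq> \<Union>(cells K)"
  proof
    fix x assume "x \<in> \<Union>K"
    then obtain \<sigma> where "\<sigma> \<in> K" "x \<in> rel_interior \<sigma>"
      by (rule mem_rel_interior_simplex)
    then show "x \<in> \<Union>(cells K)"
      unfolding cells_eq using rel_interior_subset by blast
  qed
qed

lemma mem_Union_cells_iff:
  "M \<subseteq> cells K \<Longrightarrow> c \<in> cells K \<Longrightarrow> x \<in> c \<Longrightarrow> x \<in> \<Union>M \<longleftrightarrow> c \<in> M"
  using cells_disjoint by blast

lemma Union_cells_eqI:
  assumes "S \<subseteq> \<Union>K" "M \<subseteq> cells K"
    and "\<And>c x. c \<in> cells K \<Longrightarrow> x \<in> c \<Longrightarrow> x \<in> S \<longleftrightarrow> c \<in> M"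
  shows "S = \<Union>M"
  using assms Union_cells by blast

lemma cacc_subset_closure: "cacc K c d \<Longrightarrow> c \<subseteq> closure d"
proof (elim caccE)
  fix \<sigma> \<tau> assume "\<tau> \<in> K" "c = rel_interior \<sigma>" "d = rel_interior \<tau>" "\<sigma> face_of \<tau>"
  moreover have "convex \<tau>" "closed \<tau>"
    using \<open>\<tau> \<in> K\<close> simplex is_simplex_convex is_simplex_compact compact_imp_closed by blast+
  then have "closure (rel_interior \<tau>) = \<tau>"
    by (simp add: convex_closure_rel_interior)
  ultimately show "c \<subseteq> closure d"
    using rel_interior_subset face_of_imp_subset by blast
qed

lemma cacc_open_segment:
  assumes "cacc K c d" "p \<in> c" "q \<in> d"
  shows "open_segment p q \<subseteq> d"
proof (rule caccE[OF assms(1)])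
  fix \<sigma> \<tau> assume "\<tau> \<in> K" "d = rel_interior \<tau>"
  moreover have "p \<in> closure \<tau>"
    using cacc_subset_closure[OF assms(1)] assms(2) \<open>d = rel_interior \<tau>\<close>
      closure_mono[OF rel_interior_subset] by blast
  ultimately show "open_segment p q \<subseteq> d"
    using rel_interior_closure_convex_segment[OF is_simplex_convex[OF simplex]] assms(3)
    by (metis open_segment_commute)
qed

lemma cacc_closed_segment:
  assumes "cacc K c d \<or> cacc K d c" "p \<in> c" "q \<in> d"
  shows "closed_segment p q \<subseteq> c \<union> d"
  using assms cacc_open_segment[of c d p q] cacc_open_segment[of d c q p]
  by (auto simp: closed_segment_eq_open open_segment_commute)

lemma cacc_linepath_image:
  assumes "cacc K c d" "p \<in> c" "q \<in> d"
  shows "linepath p q ` {0<..1} \<subseteq> d"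
proof
  fix y assume "y \<in> linepath p q ` {0<..1}"
  then obtain t where t: "t \<in> {0<..1}" "y = linepath p q t" by blast
  consider "p = q" | "t = 1" | "p \<noteq> q" "t \<in> {0<..<1}"
    using t(1) by fastforce
  then show "y \<in> d"
  proof cases
    case 3
    then show ?thesis
      using t(2) linepath_in_open_segment cacc_open_segment[OF assms] by blast
  qed (use t(2) assms(3) in \<open>auto simp: linepath_refl linepath_1'\<close>)
qed

definition open_star :: "'a set \<Rightarrow> 'a set" where
  "open_star c = \<Union>{d \<in> cells K. cacc K c d}"

lemma cacc_subset_simplex:
  assumes "cacc K c d" "\<tau> \<in> K" "y \<in> \<tau>" "y \<in> d"
  shows "c \<subseteq> \<tau>"
proof (rule caccE[OF assms(1)])
  fix \<sigma> \<rho> assume "\<rho> \<in> K" "c = rel_interior \<sigma>" "d = rel_interior \<rho>" "\<sigma> face_of \<rho>"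
  moreover have "\<rho> face_of \<tau>"
    using face_of_if_rel_interior_meets assms(2-4) \<open>\<rho> \<in> K\<close> \<open>d = rel_interior \<rho>\<close> by blast
  ultimately show "c \<subseteq> \<tau>"
    using face_of_imp_subset rel_interior_subset by blast
qed

lemma open_star_eq:
  assumes c: "c \<in> cells K"
  shows "open_star c = \<Union>K - \<Union>{\<tau> \<in> K. \<tau> \<inter> c = {}}"
proof
  show "open_star c \<subseteq> \<Union>K - \<Union>{\<tau> \<in> K. \<tau> \<inter> c = {}}"
  proof
    fix y assume "y \<in> open_star c"
    then obtain d where d: "d \<in> cells K" "cacc K c d" "y \<in> d"
      unfolding open_star_def by blast
    then have "y \<in> \<Union>K"
      using Union_cells by blast
    moreover have "\<tau> \<inter> c \<noteq> {}" if "\<tau> \<in> K" "y \<in> \<tau>" for \<tau>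
      using cacc_subset_simplex[OF d(2) that d(3)] cells_nonempty[OF c] by blast
    ultimately show "y \<in> \<Union>K - \<Union>{\<tau> \<in> K. \<tau> \<inter> c = {}}"
      by blast
  qed
  show "\<Union>K - \<Union>{\<tau> \<in> K. \<tau> \<inter> c = {}} \<subseteq> open_star c"
  proof
    fix y assume y: "y \<in> \<Union>K - \<Union>{\<tau> \<in> K. \<tau> \<inter> c = {}}"
    then obtain \<rho> where \<rho>: "\<rho> \<in> K" "y \<in> rel_interior \<rho>"
      by (meson DiffD1 mem_rel_interior_simplex)
    obtain \<sigma> where \<sigma>: "\<sigma> \<in> K" "\<sigma> \<noteq> {}" "c = rel_interior \<sigma>"
      using c unfolding cells_eq by blast
    have "\<rho> \<inter> c \<noteq> {}"
      using y \<rho> rel_interior_subset by blast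
    then have "\<sigma> face_of \<rho>"
      using face_of_if_rel_interior_meets \<rho>(1) \<sigma> by blast
    moreover have "\<rho> \<noteq> {}"
      using \<rho>(2) rel_interior_subset by blast
    ultimately show "y \<in> open_star c"
      unfolding open_star_def cells_eq using \<rho> \<sigma> cacc_iff_face_of by blast
  qed
qed

lemma openin_open_star:
  assumes c: "c \<in> cells K"
  shows "openin (top_of_set (\<Union>K)) (open_star c)"
proof -
  have "closedin (top_of_set (\<Union>K)) (\<Union>{\<tau> \<in> K. \<tau> \<inter> c = {}})"
    using finite_complex simplex is_simplex_compact compact_imp_closed
    by (intro closed_subset closed_Union) auto
  then show ?thesis
    unfolding open_star_eq[OF c]
    using openin_diff[OF openin_topspace] by (metis topspace_euclidean_subtopology)
qed

lemma cell_subset_open_star: "c \<in> cells K \<Longrightarrow> c \<subseteq> open_star c"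
  unfolding open_star_def using cacc_refl by blast

lemma open_star_cacc: "y \<in> open_star c \<Longrightarrow> d \<in> cells K \<Longrightarrow> y \<in> d \<Longrightarrow> cacc K c d"
  unfolding open_star_def using cells_disjoint by blast

lemma interior_of_Union_cells:
  assumes "M \<subseteq> cells K"
  shows "top_of_set (\<Union>K) interior_of \<Union>M = \<Union>{c \<in> cells K. \<forall>d \<in> cells K. cacc K c d \<longrightarrow> d \<in> M}"
proof (rule Union_cells_eqI)
  show "top_of_set (\<Union>K) interior_of \<Union>M \<subseteq> \<Union>K"
    by (metis interior_of_subset_topspace topspace_euclidean_subtopology)
  fix c x assume c: "c \<in> cells K" and x: "x \<in> c"
  show "x \<in> top_of_set (\<Union>K) interior_of \<Union>M
    \<longleftrightarrow> c \<in> {c \<in> cells K. \<forall>d \<in> cells K. cacc K c d \<longrightarrow> d \<in> M}"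
  proof
    assume "x \<in> top_of_set (\<Union>K) interior_of \<Union>M"
    then obtain U where U: "open U" "x \<in> U" "\<Union>K \<inter> U \<subseteq> \<Union>M"
      unfolding interior_of_def openin_open by blast
    have "d \<in> M" if d: "d \<in> cells K" "cacc K c d" for d
    proof -
      have "U \<inter> closure d \<noteq> {}"
        using U(2) x cacc_subset_closure[OF d(2)] by blast
      then obtain y where "y \<in> U" "y \<in> d"
        using open_Int_closure_eq_empty[OF U(1)] by blast
      then show "d \<in> M"
        using U(3) d(1) Union_cells mem_Union_cells_iff[OF assms d(1)] by blast
    qed
    then show "c \<in> {c \<in> cells K. \<forall>d \<in> cells K. cacc K c d \<longrightarrow> d \<in> M}"
      using c by blast
  next
    assume "c \<in> {c \<in> cells K. \<forall>d \<in> cells K. cacc K c d \<longrightarrow> d \<in> M}"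
    then have "open_star c \<subseteq> \<Union>M"
      unfolding open_star_def by blast
    then show "x \<in> top_of_set (\<Union>K) interior_of \<Union>M"
      using interior_of_maximal openin_open_star cell_subset_open_star c x by blast
  qed
qed (use assms in blast)

definition cell_adjacency :: "'a set set \<Rightarrow> ('a set \<times> 'a set) set" where
  "cell_adjacency A = {(c, d). c \<in> A \<and> d \<in> A \<and> (cacc K c d \<or> cacc K d c)}"

lemma converse_cell_adjacency: "(cell_adjacency A)\<inverse> = cell_adjacency A"
  unfolding cell_adjacency_def by blast

lemma cell_adjacency_if_open_star:
  "A \<subseteq> cells K \<Longrightarrow> e \<in> A \<Longrightarrow> e' \<in> A \<Longrightarrow> v \<in> open_star e \<Longrightarrow> v \<in> e' \<Longrightarrow> (e, e') \<in> cell_adjacency A"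
  unfolding cell_adjacency_def using open_star_cacc by blast

lemma connected_imp_cell_adjacency:
  assumes A: "A \<subseteq> cells K" and S: "connected S" "S \<subseteq> \<Union>A"
    and x: "x \<in> S" "x \<in> a" "a \<in> A" and y: "y \<in> S" "y \<in> b" "b \<in> A"
  shows "(a, b) \<in> (cell_adjacency A)\<^sup>*"
proof -
  define R where "R u v \<longleftrightarrow> (\<exists>c\<in>A. \<exists>d\<in>A. u \<in> c \<and> v \<in> d \<and> (c, d) \<in> (cell_adjacency A)\<^sup>*)"
    for u v
  have cell_unique: "c = d" if "c \<in> A" "d \<in> A" "u \<in> c" "u \<in> d" for c d u
    using that A cells_disjoint by blast
  \<comment> \<open>\<open>R\<close> holds throughout \<open>S \<inter> open_star e\<close> around any point of a cell \<open>e\<close>,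
    so it is constant on the connected set \<open>S\<close>.\<close>
  have "R x y"
  proof (rule connected_equivalence_relation[OF S(1) x(1) y(1)])
    show "R v u" if "R u v" for u v
      using that rtrancl_converseI[of _ _ "cell_adjacency A"] converse_cell_adjacency
      unfolding R_def by metis
    show "R u w" if "R u v" "R v w" for u v w
      using that cell_unique rtrancl_trans unfolding R_def by metis
    fix u assume "u \<in> S"
    then obtain e where e: "e \<in> A" "u \<in> e"
      using S(2) by blast
    obtain W where W: "open W" "open_star e = \<Union>K \<inter> W"
      using openin_open_star e(1) A unfolding openin_open by blast
    have "S \<subseteq> \<Union>K"
      using S(2) A Union_cells by blast
    then have "openin (top_of_set S) (S \<inter> W)" "u \<in> S \<inter> W"
      using W \<open>u \<in> S\<close> e cell_subset_open_star A by (auto simp: openin_open_Int)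
    moreover have "R u v" if v: "v \<in> S \<inter> W" for v
    proof -
      obtain e' where "e' \<in> A" "v \<in> e'"
        using v S(2) by blast
      moreover have "v \<in> open_star e"
        using v W(2) \<open>S \<subseteq> \<Union>K\<close> by blast
      ultimately show "R u v"
        unfolding R_def using cell_adjacency_if_open_star[OF A e(1)] e by blast
    qed
    ultimately show "\<exists>T. openin (top_of_set S) T \<and> u \<in> T \<and> (\<forall>v\<in>T. R u v)"
      by blast
  qed
  then show ?thesis
    unfolding R_def using cell_unique x y by blast
qed

lemma pm_path_of_cell_adjacency:
  assumes A: "A \<subseteq> cells K" and chain: "(c0, d0) \<in> (cell_adjacency A)\<^sup>*" "c0 \<in> A"
    and ends: "cacc K c c0" "cacc K b d0"
  obtains k \<pi> where "pm_path K k \<pi>" "\<pi> 0 = c" "\<forall>i\<in>{1..k-1}. \<pi> i \<in> A" "\<pi> k = b"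
proof -
  obtain n f where f: "f 0 = c0" "f n = d0" "\<forall>i<n. (f i, f (Suc i)) \<in> cell_adjacency A"
    using chain(1) rtrancl_power relpow_fun_conv by metis
  have fA: "f j \<in> A" if "j \<le> n" for j
    using that f(1,3) chain(2) unfolding cell_adjacency_def by (cases j) auto
  define \<pi> where "\<pi> i = (if i = 0 then c else if i \<le> Suc n then f (i - 1) else b)" for i
  have \<pi>_mid: "\<pi> i = f (i - 1)" if "1 \<le> i" "i \<le> Suc n" for i
    using that unfolding \<pi>_def by simp
  have mid: "\<forall>i\<in>{1..Suc (Suc n) - 1}. \<pi> i \<in> A"
    using \<pi>_mid fA by auto
  have "\<pi> i \<in> cells K" if "i \<le> Suc (Suc n)" for i
    using that mid A ends cacc_cells unfolding \<pi>_def by (cases "i = 0 \<or> i = Suc (Suc n)") auto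
  moreover have ends_\<pi>: "cacc K (\<pi> 0) (\<pi> 1)" "cacc K (\<pi> (Suc (Suc n))) (\<pi> (Suc (Suc n) - 1))"
    using ends f(1,2) \<pi>_mid[of 1] \<pi>_mid[of "Suc n"] by (simp_all add: \<pi>_def)
  moreover have "cacc K (\<pi> i) (\<pi> (Suc i)) \<or> cacc K (\<pi> (Suc i)) (\<pi> i)"
    if "i < Suc (Suc n)" for i
  proof -
    have "i = 0 \<or> 1 \<le> i \<and> i \<le> n \<or> i = Suc n"
      using that by linarith
    then consider "i = 0" | "1 \<le> i" "i \<le> n" | "i = Suc n"
      by blast
    then show ?thesis
    proof cases
      case 2
      then have "(f (i - 1), f i) \<in> cell_adjacency A"
        using f(3)[rule_format, of "i - 1"] by simp
      then show ?thesis
        using \<pi>_mid[of i] \<pi>_mid[of "Suc i"] 2 unfolding cell_adjacency_def by simp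
    qed (use ends_\<pi> in simp_all)
  qed
  ultimately have "pm_path K (Suc (Suc n)) \<pi>"
    unfolding pm_path_def by simp
  then show thesis
    using that mid unfolding \<pi>_def by auto
qed

lemma pm_path_of_path:
  assumes A: "A \<subseteq> cells K" and B: "B \<subseteq> cells K" and c: "c \<in> cells K" "g 0 \<in> c"
    and g: "path g" "path_image g \<subseteq> \<Union>K" "g ` {0<..<1} \<subseteq> \<Union>A" "g 1 \<in> \<Union>B"
  obtains k \<pi> where "pm_path K k \<pi>" "\<pi> 0 = c" "\<forall>i\<in>{1..k-1}. \<pi> i \<in> A" "\<pi> k \<in> B"
proof -
  obtain b where b: "b \<in> B" "g 1 \<in> b"
    using g(4) by blast
  obtain t0 where t0: "0 < t0" "t0 \<le> 1/2" "g t0 \<in> open_star c"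
    using path_enters_open_near_start[OF g(1,2) openin_open_star[OF c(1)]]
      cell_subset_open_star[OF c(1)] c(2) by blast
  obtain t1 where t1: "1/2 \<le> t1" "t1 < 1" "g t1 \<in> open_star b"
    using path_enters_open_near_end[OF g(1,2) openin_open_star] b B
      cell_subset_open_star by blast
  have "t0 \<in> {0<..<1}" "t1 \<in> {0<..<1}"
    using t0 t1 by auto
  then have "g t0 \<in> \<Union>A" "g t1 \<in> \<Union>A"
    using g(3) by blast+
  then obtain c0 d0 where c0: "c0 \<in> A" "g t0 \<in> c0" and d0: "d0 \<in> A" "g t1 \<in> d0"
    by blast
  define S where "S = g ` {t0..t1}"
  have "{t0..t1} \<subseteq> {0..1}"
    using t0 t1 by auto
  then have "connected S"
    unfolding S_def using g(1) path_def continuous_on_subset connected_continuous_image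
    by (metis connected_Icc)
  moreover have "S \<subseteq> \<Union>A"
    using g(3) t0 t1 unfolding S_def by auto
  moreover have "g t0 \<in> S" "g t1 \<in> S"
    using t0 t1 unfolding S_def by auto
  ultimately have "(c0, d0) \<in> (cell_adjacency A)\<^sup>*"
    by (intro connected_imp_cell_adjacency[OF A _ _ _ c0(2,1) _ d0(2,1)])
  moreover have "cacc K c c0" "cacc K b d0"
    using open_star_cacc[OF t0(3) _ c0(2)] open_star_cacc[OF t1(3) _ d0(2)] c0(1) d0(1) A
    by blast+
  ultimately obtain k \<pi> where "pm_path K k \<pi>" "\<pi> 0 = c" "\<forall>i\<in>{1..k-1}. \<pi> i \<in> A" "\<pi> k = b"
    by (rule pm_path_of_cell_adjacency[OF A _ c0(1)])
  then show thesis
    using that b(1) by blast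
qed

lemma adjacent_cells_path_component:
  assumes "cacc K c d \<or> cacc K d c" "p \<in> c" "q \<in> d"
  shows "path_component (c \<union> d) p q"
  using path_component_linepath[OF cacc_closed_segment[OF assms]] .

lemma pm_path_path_component:
  assumes \<pi>: "pm_path K k \<pi>" and p: "p \<in> \<pi> 1" and q: "q \<in> \<pi> (k - 1)"
  shows "path_component (\<Union>(\<pi> ` {1..k-1})) p q"
proof -
  let ?M = "\<Union>(\<pi> ` {1..k-1})"
  have k: "2 \<le> k" and cells: "\<And>i. i \<le> k \<Longrightarrow> \<pi> i \<in> cells K"
    and adjacent: "\<And>i. i < k \<Longrightarrow> cacc K (\<pi> i) (\<pi> (Suc i)) \<or> cacc K (\<pi> (Suc i)) (\<pi> i)"
    using \<pi> unfolding pm_path_def by auto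
  have sub: "\<pi> i \<subseteq> ?M" if "1 \<le> i" "i \<le> k - 1" for i
    using that by auto
  have "path_component ?M p q" if "1 \<le> j" "j \<le> k - 1" "q \<in> \<pi> j" for j q
    using that
  proof (induction j arbitrary: q)
    case (Suc j)
    show ?case
    proof (cases "j = 0")
      case True
      have "path_component (\<pi> 1 \<union> \<pi> 1) p q"
        using adjacent_cells_path_component[of "\<pi> 1" "\<pi> 1" p q] cacc_refl[OF cells[of 1]]
          k p Suc.prems(3) True by simp
      moreover have "\<pi> 1 \<subseteq> ?M"
        by (intro sub) (use k in auto)
      ultimately show ?thesis
        using path_component_of_subset by simp
    next
      case False
      obtain r where r: "r \<in> \<pi> j"
        using cells_nonempty[OF cells, of j] Suc.prems(2) by fastforce
      have "path_component (\<pi> j \<union> \<pi> (Suc j)) r q"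
        using adjacent_cells_path_component[OF adjacent r Suc.prems(3)] Suc.prems(2) by simp
      then have "path_component ?M r q"
        using path_component_of_subset[of "\<pi> j \<union> \<pi> (Suc j)" ?M] sub[of j] sub[of "Suc j"]
          Suc.prems(2) False by simp
      moreover have "path_component ?M p r"
        using Suc.IH[OF _ _ r] Suc.prems(2) False by simp
      ultimately show ?thesis
        using path_component_trans by blast
    qed
  qed simp
  moreover have "1 \<le> k - 1"
    using k by simp
  ultimately show ?thesis
    using q by blast
qed

lemma path_of_pm_path:
  assumes \<pi>: "pm_path K k \<pi>" and x: "x \<in> \<pi> 0"
  obtains g where "path g" "path_image g \<subseteq> \<Union>K" "g 0 = x"
    "g ` {0<..<1} \<subseteq> \<Union>(\<pi> ` {1..k-1})" "g 1 \<in> \<pi> k"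
proof -
  let ?M = "\<Union>(\<pi> ` {1..k-1})"
  have k: "2 \<le> k" and cells: "\<And>i. i \<le> k \<Longrightarrow> \<pi> i \<in> cells K"
    and first: "cacc K (\<pi> 0) (\<pi> 1)" and last: "cacc K (\<pi> k) (\<pi> (k - 1))"
    using \<pi> unfolding pm_path_def by auto
  have "\<pi> 1 \<noteq> {}" "\<pi> (k - 1) \<noteq> {}" "\<pi> k \<noteq> {}"
    using cells_nonempty cells k by simp_all
  then obtain p q y where p: "p \<in> \<pi> 1" and q: "q \<in> \<pi> (k - 1)" and y: "y \<in> \<pi> k"
    by blast
  obtain h where h: "path h" "path_image h \<subseteq> ?M" "pathstart h = p" "pathfinish h = q"
    using pm_path_path_component[OF \<pi> p q] unfolding path_component_def by blast
  define g where "g = linepath x p +++ h +++ linepath q y"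
  have "1 \<in> {1..k-1}" "k - 1 \<in> {1..k-1}"
    using k by auto
  then have M: "\<pi> 1 \<subseteq> ?M" "\<pi> (k - 1) \<subseteq> ?M"
    by blast+
  have "linepath q y ` {0..<1} = linepath y q ` {0<..1}"
    using reversepath_image_atLeastLessThan[of "linepath y q"] by simp
  then have "linepath q y ` {0..<1} \<subseteq> ?M"
    using cacc_linepath_image[OF last y q] M(2) by (metis order_trans)
  moreover have "h ` {0..1} \<subseteq> ?M"
    using h(2) unfolding path_image_def .
  ultimately have "(h +++ linepath q y) ` {0..<1} \<subseteq> ?M"
    using joinpaths_image_atLeastLessThan[of h "linepath q y"] by (meson Un_least order_trans)
  moreover have "linepath x p ` {0<..1} \<subseteq> ?M"
    using cacc_linepath_image[OF first x p] M(1) by (rule order_trans)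
  ultimately have "g ` {0<..<1} \<subseteq> ?M"
    using joinpaths_image_greaterThanLessThan[of "linepath x p" "h +++ linepath q y"]
    unfolding g_def by (meson Un_least order_trans)
  moreover have "path_image g \<subseteq> \<Union>K"
  proof -
    have sub: "\<pi> i \<subseteq> \<Union>K" if "i \<le> k" for i
      using cells[OF that] Union_cells by blast
    have "path_image g \<subseteq> path_image (linepath x p) \<union> path_image (h +++ linepath q y)"
      unfolding g_def by (rule path_image_join_subset)
    also have "\<dots> \<subseteq> closed_segment x p \<union> (path_image h \<union> closed_segment q y)"
      using path_image_join_subset[of h "linepath q y"] by auto
    also have "\<dots> \<subseteq> (\<pi> 0 \<union> \<pi> 1) \<union> (?M \<union> (\<pi> (k - 1) \<union> \<pi> k))"
      by (intro Un_mono h(2) cacc_closed_segment[OF disjI1[OF first] x p]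
          cacc_closed_segment[OF disjI2[OF last] q y])
    also have "\<dots> \<subseteq> \<Union>K"
      by (intro Un_least UN_least sub) (use k in auto)
    finally show ?thesis .
  qed
  moreover have "pathstart g = x" "pathfinish g = y" "path g"
    using h by (simp_all add: g_def)
  ultimately show thesis
    using that y unfolding pathstart_def pathfinish_def by blast
qed

lemma Union_cells_Diff: "M \<subseteq> cells K \<Longrightarrow> \<Union>K - \<Union>M = \<Union>(cells K - M)"
  using Union_cells cells_disjoint by blast

lemma Union_cells_Int: "M \<subseteq> cells K \<Longrightarrow> N \<subseteq> cells K \<Longrightarrow> \<Union>M \<inter> \<Union>N = \<Union>(M \<inter> N)"
  using cells_disjoint by blast

lemma path_iff_pm_path:
  assumes M: "M \<subseteq> cells K" and N: "N \<subseteq> cells K" and c: "c \<in> cells K" and x: "x \<in> c"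
  shows "(\<exists>g. path g \<and> path_image g \<subseteq> \<Union>K \<and> g 0 = x \<and> g ` {0<..<1} \<subseteq> \<Union>M \<and> g 1 \<in> \<Union>N)
    \<longleftrightarrow> (\<exists>k \<pi>. pm_path K k \<pi> \<and> \<pi> 0 = c \<and> (\<forall>i\<in>{1..k-1}. \<pi> i \<in> M) \<and> \<pi> k \<in> N)"
proof
  assume "\<exists>g. path g \<and> path_image g \<subseteq> \<Union>K \<and> g 0 = x \<and> g ` {0<..<1} \<subseteq> \<Union>M \<and> g 1 \<in> \<Union>N"
  then obtain g where g: "path g" "path_image g \<subseteq> \<Union>K" "g 0 = x"
    "g ` {0<..<1} \<subseteq> \<Union>M" "g 1 \<in> \<Union>N"
    by blast
  obtain k \<pi> where "pm_path K k \<pi>" "\<pi> 0 = c" "\<forall>i\<in>{1..k-1}. \<pi> i \<in> M" "\<pi> k \<in> N"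
    by (rule pm_path_of_path[OF M N c _ g(1,2,4,5)]) (use g(3) x in simp)
  then show "\<exists>k \<pi>. pm_path K k \<pi> \<and> \<pi> 0 = c \<and> (\<forall>i\<in>{1..k-1}. \<pi> i \<in> M) \<and> \<pi> k \<in> N"
    by blast
next
  assume "\<exists>k \<pi>. pm_path K k \<pi> \<and> \<pi> 0 = c \<and> (\<forall>i\<in>{1..k-1}. \<pi> i \<in> M) \<and> \<pi> k \<in> N"
  then obtain k \<pi> where \<pi>: "pm_path K k \<pi>" "\<pi> 0 = c" "\<forall>i\<in>{1..k-1}. \<pi> i \<in> M" "\<pi> k \<in> N"
    by blast
  obtain g where g: "path g" "path_image g \<subseteq> \<Union>K" "g 0 = x"
    "g ` {0<..<1} \<subseteq> \<Union>(\<pi> ` {1..k-1})" "g 1 \<in> \<pi> k"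
    by (rule path_of_pm_path[OF \<pi>(1)]) (use x \<pi>(2) in simp)
  moreover have "\<Union>(\<pi> ` {1..k-1}) \<subseteq> \<Union>M"
    using \<pi>(3) by blast
  ultimately show "\<exists>g. path g \<and> path_image g \<subseteq> \<Union>K \<and> g 0 = x \<and> g ` {0<..<1} \<subseteq> \<Union>M \<and> g 1 \<in> \<Union>N"
    using \<pi>(4) by blast
qed

lemma reach_Union_cells:
  assumes "M \<subseteq> cells K" "N \<subseteq> cells K"
  shows "{x \<in> \<Union>K. \<exists>g. path g \<and> path_image g \<subseteq> \<Union>K \<and> g 0 = x
                      \<and> g ` {0<..<1} \<subseteq> \<Union>M \<and> g 1 \<in> \<Union>N}
    = \<Union>{c \<in> cells K. \<exists>k \<pi>. pm_path K k \<pi> \<and> \<pi> 0 = c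
                      \<and> (\<forall>i\<in>{1..k-1}. \<pi> i \<in> M) \<and> \<pi> k \<in> N}"
proof (rule Union_cells_eqI, goal_cases)
  case (3 c x)
  then have "x \<in> \<Union>K"
    using Union_cells by blast
  then show ?case
    using path_iff_pm_path[OF assms 3] 3(1) by simp
qed auto

lemma psem_eq_Union_msem:
  assumes "\<forall>p. \<exists>C. C \<subseteq> cells K \<and> V p = \<Union>C"
  shows "psem K V \<phi> = \<Union>(msem K V \<phi>)"
proof (induction \<phi>)
  case (FAtom p)
  obtain C where "C \<subseteq> cells K" "V p = \<Union>C"
    using assms by blast
  then show ?case
    by auto
next
  case (FGamma \<phi> \<psi>)
  show ?case
    unfolding psem.simps msem.simps FGamma.IH
    by (rule reach_Union_cells[OF msem_subset_cells msem_subset_cells])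
qed (simp_all add: Union_cells Union_cells_Diff Union_cells_Int interior_of_Union_cells
    msem_subset_cells)

end

theorem mainTheorem12:
  fixes K :: "'a::euclidean_space set set" and V :: "'p::finite \<Rightarrow> 'a set"
    and x :: 'a and \<sigma> :: "'a set" and \<phi> :: "'p form"
  assumes "polyhedral_model K V"
    and "x \<in> \<Union>K" and "\<sigma> \<in> K" and "x \<in> cell \<sigma>"
  shows "x \<in> psem K V \<phi> \<longleftrightarrow> cell \<sigma> \<in> msem K V \<phi>"
proof -
  interpret simplicial K
    using assms(1) by unfold_locales (simp add: polyhedral_model_def)
  have "cell \<sigma> \<in> cells K"
    using assms(3,4) cell_eq unfolding cells_def by force
  moreover have "psem K V \<phi> = \<Union>(msem K V \<phi>)"
    using assms(1) psem_eq_Union_msem unfolding polyhedral_model_def by blast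
  ultimately show ?thesis
    using mem_Union_cells_iff[OF msem_subset_cells] assms(4) by blast
qed

end
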